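(* Consider the following procedure (MPO). Let $\pi^1$ be a reference policy with $\pi^1_h(a|s)\ge\underline{\pi}>0$ for all $h,s,a$, let $T\ge1$ and $\beta=\sqrt{\frac{\log\underline{\pi}^{-1}}{TH^2}}$, and for $t=1,\dots,T$ define $$\pi^{t+1}_h(a|s)\ \propto\ \pi^t_h(a|s)\exp\Big[\beta\,\mathbb{E}_{(S',A')\sim d^{\pi^t}_h(\cdot|s_1(s))}Q^{\pi^t,\pi^t}_h(s,a,S',A')\Big].$$ Then there exists a policy $\bar\pi^T$ such that $d^{\bar\pi^T}_h=\frac1T\sum_{t=1}^Td^{\pi^t}_h$ for all $h\in[H]$, and for $T=\frac{16H^4\log\underline{\pi}^{-1}}{\epsilon^2}$ the pair $(\bar\pi^T,\bar\pi^T)$ is an $\epsilon$-approximate Nash equilibrium. Hence this procedure outputs an $\epsilon$-approximate Nash equilibrium after $\frac{16H^4\log\underline{\pi}^{-1}}{\epsilon^2}$ policy updates.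
   Context: Finite-horizon MDP: state space $\mathcal{S}$, action space $\mathcal{A}$, horizon $H$, transition kernel $f$, initial distribution $\nu_1$. Each state $s$ is reachable from a unique initial state, denoted $s_1(s)$. Policies are non-stationary, $\pi=(\pi_h)_{h=1}^H$, $\Pi$ is the set of policies. Pairwise reward $r(s,a,s',a')=\mathbb{P}([s,a]\succ[s',a'])\in[0,1]$ with $r(s,a,s',a')=1-r(s',a',s,a)$. For policies $\pi,\pi'$, trajectories are generated independently from a common initial state $S_1=S'_1\sim\nu_1$: $A_\tau\sim\pi_\tau(\cdot|S_\tau)$, $S_{\tau+1}\sim f(\cdot|S_\tau,A_\tau)$, and similarly for $(S',A')$ under $\pi'$. Define $Q^{\pi,\pi'}_h(s,a,s',a')=\mathbb{E}\big[\sum_{\tau=h}^Hr(S_\tau,A_\tau,S'_\tau,A'_\tau)\mid S_h=s,S'_h=s',A_h=a,A'_h=a'\big]$, $V^{\pi,\pi'}(s,s')=\mathbb{E}\big[\sum_{\tau=1}^Hr(S_\tau,A_\tau,S'_\tau,A'_\tau)\mid S_1=s,S'_1=s'\big]$, and $\langle\nu_1,V^{\pi,\pi'}\rangle=\mathbb{E}_{S_1\sim\nu_1}V^{\pi,\pi'}(S_1,S_1)$. Occupancy measures: $d^\pi_h(s,a)=\Pr(S_h=s,A_h=a)$ and $d^\pi_h(s,a|s_1)=\Pr(S_h=s,A_h=a\mid S_1=s_1)$. A pair $(\pi,\pi)$ is an $\epsilon$-approximate Nash equilibrium if $\langle\nu_1,V^{\pi,\pi}\rangle-\min_{\bar\pi\in\Pi}\langle\nu_1,V^{\pi,\bar\pi}\rangle\le\epsilon$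 and $\max_{\bar\pi\in\Pi}\langle\nu_1,V^{\bar\pi,\pi}\rangle-\langle\nu_1,V^{\pi,\pi}\rangle\le\epsilon$. *)

theory Defs
  imports Complex_Main
begin

text \<open>Transition kernel f s a s' = P(S_{h+1} = s' | S_h = s, A_h = a) (stationary),
  initial distribution nu1, pairwise reward r.  Steps are indexed h = 1..H.
  A (non-stationary) policy pi gives pi h s a = pi_h(a|s).\<close>

type_synonym ('s, 'a) policy = "nat \<Rightarrow> 's \<Rightarrow> 'a \<Rightarrow> real"

definition is_dist :: "('x::finite \<Rightarrow> real) \<Rightarrow> bool" where
  "is_dist p \<longleftrightarrow> (\<forall>x. 0 \<le> p x) \<and> sum p UNIV = 1"

definition policies :: "nat \<Rightarrow> ('s::finite, 'a::finite) policy set" where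
  "policies H = {\<pi>. \<forall>h\<in>{1..H}. \<forall>s. is_dist (\<pi> h s)}"

fun reach :: "('s \<Rightarrow> 'a \<Rightarrow> 's \<Rightarrow> real) \<Rightarrow> 's \<Rightarrow> nat \<Rightarrow> 's set" where
  "reach f s0 0 = {}"
| "reach f s0 (Suc 0) = {s0}"
| "reach f s0 (Suc (Suc h)) = {s'. \<exists>s\<in>reach f s0 (Suc h). \<exists>a. f s a s' > 0}"

fun sdist :: "('s::finite \<Rightarrow> 'a::finite \<Rightarrow> 's \<Rightarrow> real) \<Rightarrow> ('s, 'a) policy \<Rightarrow> 's \<Rightarrow> nat \<Rightarrow> 's \<Rightarrow> real" where
  "sdist f \<pi> s0 0 s = 0"
| "sdist f \<pi> s0 (Suc 0) s = (if s = s0 then 1 else 0)"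
| "sdist f \<pi> s0 (Suc (Suc h)) s' =
     (\<Sum>s\<in>UNIV. \<Sum>a\<in>UNIV. sdist f \<pi> s0 (Suc h) s * \<pi> (Suc h) s a * f s a s')"

definition occ_cond :: "('s::finite \<Rightarrow> 'a::finite \<Rightarrow> 's \<Rightarrow> real) \<Rightarrow> ('s, 'a) policy \<Rightarrow> nat \<Rightarrow> 's \<Rightarrow> 's \<Rightarrow> 'a \<Rightarrow> real" where
  "occ_cond f \<pi> h s0 s a = sdist f \<pi> s0 h s * \<pi> h s a"

definition occ :: "('s::finite \<Rightarrow> 'a::finite \<Rightarrow> 's \<Rightarrow> real) \<Rightarrow> ('s \<Rightarrow> real) \<Rightarrow> ('s, 'a) policy \<Rightarrow> nat \<Rightarrow> 's \<Rightarrow> 'a \<Rightarrow> real" where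
  "occ f \<nu>1 \<pi> h s a = (\<Sum>s0\<in>UNIV. \<nu>1 s0 * occ_cond f \<pi> h s0 s a)"

text \<open>QQ n h s a s' a': expected sum of pairwise rewards over steps h..h+n,
  given S_h = s, A_h = a, S'_h = s', A'_h = a' (independent trajectories).\<close>
fun QQ :: "('s::finite \<Rightarrow> 'a::finite \<Rightarrow> 's \<Rightarrow> real) \<Rightarrow> ('s \<Rightarrow> 'a \<Rightarrow> 's \<Rightarrow> 'a \<Rightarrow> real)
           \<Rightarrow> ('s, 'a) policy \<Rightarrow> ('s, 'a) policy \<Rightarrow> nat \<Rightarrow> nat \<Rightarrow> 's \<Rightarrow> 'a \<Rightarrow> 's \<Rightarrow> 'a \<Rightarrow> real" where
  "QQ f r \<pi> \<pi>' 0 h s a s' a' = r s a s' a'"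
| "QQ f r \<pi> \<pi>' (Suc n) h s a s' a' = r s a s' a' +
     (\<Sum>x\<in>UNIV. \<Sum>x'\<in>UNIV. f s a x * f s' a' x' *
        (\<Sum>b\<in>UNIV. \<Sum>b'\<in>UNIV. \<pi> (Suc h) x b * \<pi>' (Suc h) x' b' * QQ f r \<pi> \<pi>' n (Suc h) x b x' b'))"

definition Qfun where
  "Qfun f r H \<pi> \<pi>' h = QQ f r \<pi> \<pi>' (H - h) h"

definition Vfun where
  "Vfun f r H \<pi> \<pi>' s s' = (\<Sum>a\<in>UNIV. \<Sum>a'\<in>UNIV. \<pi> 1 s a * \<pi>' 1 s' a' * Qfun f r H \<pi> \<pi>' 1 s a s' a')"

definition val where
  "val f r \<nu>1 H \<pi> \<pi>' = (\<Sum>s\<in>UNIV. \<nu>1 s * Vfun f r H \<pi> \<pi>' s s)"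

definition approx_NE where
  "approx_NE f r \<nu>1 H \<epsilon> \<pi> \<longleftrightarrow>
     val f r \<nu>1 H \<pi> \<pi> - (INF \<sigma>\<in>policies H. val f r \<nu>1 H \<pi> \<sigma>) \<le> \<epsilon> \<and>
     (SUP \<sigma>\<in>policies H. val f r \<nu>1 H \<sigma> \<pi>) - val f r \<nu>1 H \<pi> \<pi> \<le> \<epsilon>"

text \<open>One MPO update with step size beta; s1 maps a state to its initial state.\<close>
definition mpo_update where
  "mpo_update f r H s1 \<beta> \<pi> =
     (let G = (\<lambda>h s a. \<Sum>s'\<in>UNIV. \<Sum>a'\<in>UNIV. occ_cond f \<pi> h (s1 s) s' a' * Qfun f r H \<pi> \<pi> h s a s' a')
      in (\<lambda>h s a. \<pi> h s a * exp (\<beta> * G h s a) / (\<Sum>b\<in>UNIV. \<pi> h s b * exp (\<beta> * G h s b))))"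

end

theory Submission
  imports Defs
begin

(* Antisymmetry of the preference makes the game symmetric and constant-sum:
   V(sigma, pi) + V(pi, sigma) = H, so V(pi, pi) = H/2 and (pi_bar, pi_bar) is an
   epsilon-equilibrium as soon as V(sigma, pi_bar) <= H/2 + epsilon for every sigma.
   Since every state determines its initial state, V(sigma, pi) depends on pi only
   through the occupancy measures of pi, and linearly so; hence V(sigma, pi_bar) is the
   average of the V(sigma, pi^t) when pi_bar realises the averaged occupancies.
   Switching from sigma to pi^t one step at a time gives a performance-difference
   lemma: V(sigma, pi^t) - H/2 is a sum over steps and states, weighted by the state
   distribution of sigma, of the gap between sigma and pi^t measured by the payoff
   that MPO feeds into its exponential-weights update.  Exponential weights has
   regret at most log(1/pi_low)/beta + beta T H^2 over T rounds, so averaging over t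
   and summing over the H steps bounds V(sigma, pi_bar) - H/2 by epsilon/2. *)

lemma sum_swap_pairs:
  fixes g :: "'s::finite \<Rightarrow> 'a::finite \<Rightarrow> 't::finite \<Rightarrow> 'b::finite \<Rightarrow> 'c::comm_monoid_add"
  shows "(\<Sum>s\<in>UNIV. \<Sum>a\<in>UNIV. \<Sum>s'\<in>UNIV. \<Sum>a'\<in>UNIV. g s a s' a')
       = (\<Sum>s'\<in>UNIV. \<Sum>a'\<in>UNIV. \<Sum>s\<in>UNIV. \<Sum>a\<in>UNIV. g s a s' a')"
proof -
  have "(\<Sum>s\<in>UNIV. \<Sum>a\<in>UNIV. \<Sum>s'\<in>UNIV. \<Sum>a'\<in>UNIV. g s a s' a')
      = (\<Sum>s\<in>UNIV. \<Sum>s'\<in>UNIV. \<Sum>a\<in>UNIV. \<Sum>a'\<in>UNIV. g s a s' a')"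
    by (rule sum.cong[OF refl], rule sum.swap)
  also have "\<dots> = (\<Sum>s'\<in>UNIV. \<Sum>s\<in>UNIV. \<Sum>a'\<in>UNIV. \<Sum>a\<in>UNIV. g s a s' a')"
    by (subst sum.swap, rule sum.cong[OF refl], rule sum.cong[OF refl], rule sum.swap)
  also have "\<dots> = (\<Sum>s'\<in>UNIV. \<Sum>a'\<in>UNIV. \<Sum>s\<in>UNIV. \<Sum>a\<in>UNIV. g s a s' a')"
    by (rule sum.cong[OF refl], rule sum.swap)
  finally show ?thesis .
qed

lemma sum_pairs_product:
  fixes A :: "'s::finite \<Rightarrow> 'a::finite \<Rightarrow> 'c::comm_semiring_1" and B :: "'t::finite \<Rightarrow> 'b::finite \<Rightarrow> 'c"
  shows "(\<Sum>s\<in>UNIV. \<Sum>a\<in>UNIV. \<Sum>s'\<in>UNIV. \<Sum>a'\<in>UNIV. A s a * B s' a')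
       = (\<Sum>s\<in>UNIV. \<Sum>a\<in>UNIV. A s a) * (\<Sum>s'\<in>UNIV. \<Sum>a'\<in>UNIV. B s' a')"
  by (simp add: sum_product) (rule sum.cong[OF refl], rule sum.swap)

lemma sum_weighted_swap:
  fixes A :: "'s::finite \<Rightarrow> 'a::finite \<Rightarrow> 'c::comm_semiring_1" and F :: "'s \<Rightarrow> 'a \<Rightarrow> 'x::finite \<Rightarrow> 'c"
  shows "(\<Sum>s\<in>UNIV. \<Sum>a\<in>UNIV. A s a * (\<Sum>x\<in>UNIV. F s a x * c x))
       = (\<Sum>x\<in>UNIV. (\<Sum>s\<in>UNIV. \<Sum>a\<in>UNIV. A s a * F s a x) * c x)"
proof -
  have "(\<Sum>s\<in>UNIV. \<Sum>a\<in>UNIV. A s a * (\<Sum>x\<in>UNIV. F s a x * c x))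
      = (\<Sum>s\<in>UNIV. \<Sum>a\<in>UNIV. \<Sum>x\<in>UNIV. A s a * F s a x * c x)"
    by (simp add: sum_distrib_left mult.assoc)
  also have "\<dots> = (\<Sum>x\<in>UNIV. \<Sum>s\<in>UNIV. \<Sum>a\<in>UNIV. A s a * F s a x * c x)"
    by (subst sum.swap) (intro sum.cong refl, rule sum.swap)
  also have "\<dots> = (\<Sum>x\<in>UNIV. (\<Sum>s\<in>UNIV. \<Sum>a\<in>UNIV. A s a * F s a x) * c x)"
    by (simp add: sum_distrib_right)
  finally show ?thesis .
qed

lemma sum_pairs_push_transition:
  fixes A B :: "'s::finite \<Rightarrow> 'a::finite \<Rightarrow> 'c::comm_semiring_1"
    and F G :: "'s \<Rightarrow> 'a \<Rightarrow> 'x::finite \<Rightarrow> 'c"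
  shows "(\<Sum>s\<in>UNIV. \<Sum>a\<in>UNIV. \<Sum>s'\<in>UNIV. \<Sum>a'\<in>UNIV.
            A s a * B s' a' * (\<Sum>x\<in>UNIV. \<Sum>x'\<in>UNIV. F s a x * G s' a' x' * C x x'))
       = (\<Sum>x\<in>UNIV. \<Sum>x'\<in>UNIV.
            (\<Sum>s\<in>UNIV. \<Sum>a\<in>UNIV. A s a * F s a x) * (\<Sum>s'\<in>UNIV. \<Sum>a'\<in>UNIV. B s' a' * G s' a' x') * C x x')"
proof -
  define PB where "PB x' = (\<Sum>s'\<in>UNIV. \<Sum>a'\<in>UNIV. B s' a' * G s' a' x')" for x'
  have inner: "(\<Sum>s'\<in>UNIV. \<Sum>a'\<in>UNIV. B s' a' * (\<Sum>x\<in>UNIV. \<Sum>x'\<in>UNIV. F s a x * G s' a' x' * C x x'))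
      = (\<Sum>x\<in>UNIV. F s a x * (\<Sum>x'\<in>UNIV. PB x' * C x x'))" for s a
  proof -
    have "(\<Sum>s'\<in>UNIV. \<Sum>a'\<in>UNIV. B s' a' * (\<Sum>x\<in>UNIV. \<Sum>x'\<in>UNIV. F s a x * G s' a' x' * C x x'))
        = (\<Sum>s'\<in>UNIV. \<Sum>a'\<in>UNIV. B s' a' * (\<Sum>x'\<in>UNIV. G s' a' x' * (\<Sum>x\<in>UNIV. F s a x * C x x')))"
      by (subst sum.swap) (simp add: sum_distrib_left mult_ac)
    also have "\<dots> = (\<Sum>x'\<in>UNIV. PB x' * (\<Sum>x\<in>UNIV. F s a x * C x x'))"
      unfolding PB_def by (rule sum_weighted_swap)
    also have "\<dots> = (\<Sum>x\<in>UNIV. F s a x * (\<Sum>x'\<in>UNIV. PB x' * C x x'))"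
      by (simp add: sum_distrib_left mult_ac, rule sum.swap)
    finally show ?thesis .
  qed
  have "(\<Sum>s\<in>UNIV. \<Sum>a\<in>UNIV. \<Sum>s'\<in>UNIV. \<Sum>a'\<in>UNIV.
            A s a * B s' a' * (\<Sum>x\<in>UNIV. \<Sum>x'\<in>UNIV. F s a x * G s' a' x' * C x x'))
      = (\<Sum>s\<in>UNIV. \<Sum>a\<in>UNIV. A s a * (\<Sum>s'\<in>UNIV. \<Sum>a'\<in>UNIV.
            B s' a' * (\<Sum>x\<in>UNIV. \<Sum>x'\<in>UNIV. F s a x * G s' a' x' * C x x')))"
    by (simp add: sum_distrib_left mult.assoc)
  also have "\<dots> = (\<Sum>s\<in>UNIV. \<Sum>a\<in>UNIV. A s a * (\<Sum>x\<in>UNIV. F s a x * (\<Sum>x'\<in>UNIV. PB x' * C x x')))"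
    by (simp only: inner)
  also have "\<dots> = (\<Sum>x\<in>UNIV. (\<Sum>s\<in>UNIV. \<Sum>a\<in>UNIV. A s a * F s a x) * (\<Sum>x'\<in>UNIV. PB x' * C x x'))"
    by (rule sum_weighted_swap)
  also have "\<dots> = (\<Sum>x\<in>UNIV. \<Sum>x'\<in>UNIV.
            (\<Sum>s\<in>UNIV. \<Sum>a\<in>UNIV. A s a * F s a x) * PB x' * C x x')"
    by (simp add: sum_distrib_left mult.assoc)
  finally show ?thesis
    unfolding PB_def .
qed

lemma sum_product_dist_le:
  fixes p :: "'x::finite \<Rightarrow> real" and q :: "'y::finite \<Rightarrow> real"
  assumes p: "is_dist p" and q: "is_dist q" and g: "\<And>x y. g x y \<le> c"
  shows "(\<Sum>x\<in>UNIV. \<Sum>y\<in>UNIV. p x * q y * g x y) \<le> c"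
proof -
  have "(\<Sum>x\<in>UNIV. \<Sum>y\<in>UNIV. p x * q y * g x y) \<le> (\<Sum>x\<in>UNIV. \<Sum>y\<in>UNIV. p x * q y * c)"
    using p q g by (intro sum_mono mult_left_mono) (auto simp: is_dist_def)
  also have "\<dots> = (\<Sum>x\<in>UNIV. p x) * (\<Sum>y\<in>UNIV. q y) * c"
    by (simp add: mult.assoc flip: sum_distrib_left sum_distrib_right)
  also have "\<dots> = c"
    using p q by (simp add: is_dist_def)
  finally show ?thesis .
qed

section \<open>Exponential weights\<close>

lemma exp_weights_dist:
  fixes p w :: "'a::finite \<Rightarrow> real"
  assumes pos: "\<And>a. 0 < p a"
  defines "q \<equiv> \<lambda>a. p a * exp (w a) / (\<Sum>b\<in>UNIV. p b * exp (w b))"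
  shows "0 < q a" and "(\<Sum>a\<in>UNIV. q a) = 1"
proof -
  have "0 < (\<Sum>b\<in>UNIV. p b * exp (w b))"
    using pos by (intro sum_pos) auto
  then show "0 < q a" and "(\<Sum>a\<in>UNIV. q a) = 1"
    using pos by (simp_all add: q_def sum_divide_distrib[symmetric])
qed

lemma ln_exp_weights_normalizer_le:
  fixes p g :: "'a::finite \<Rightarrow> real"
  assumes p: "is_dist p" and g: "\<And>a. 0 \<le> g a" "\<And>a. g a \<le> M" and \<beta>: "0 \<le> \<beta>" "\<beta> * M \<le> 1"
  shows "ln (\<Sum>a\<in>UNIV. p a * exp (\<beta> * g a)) \<le> \<beta> * (\<Sum>a\<in>UNIV. p a * g a) + \<beta>\<^sup>2 * M\<^sup>2"
proof -
  have p_nonneg: "0 \<le> p a" and p_sum: "(\<Sum>a\<in>UNIV. p a) = 1" for a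
    using p by (auto simp: is_dist_def)
  have exp_le: "exp (\<beta> * g a) \<le> 1 + \<beta> * g a + \<beta>\<^sup>2 * M\<^sup>2" for a
  proof -
    have "0 \<le> \<beta> * g a" "\<beta> * g a \<le> \<beta> * M"
      using g \<beta> by (auto intro: mult_left_mono)
    then have "exp (\<beta> * g a) \<le> 1 + \<beta> * g a + (\<beta> * g a)\<^sup>2" and "(\<beta> * g a)\<^sup>2 \<le> (\<beta> * M)\<^sup>2"
      using exp_bound \<beta>(2) by (auto intro: power_mono)
    then show ?thesis by (simp add: power_mult_distrib)
  qed
  let ?Z = "\<Sum>a\<in>UNIV. p a * exp (\<beta> * g a)"
  have "(\<Sum>a\<in>UNIV. p a * 1) \<le> ?Z"
    using p_nonneg g \<beta> by (intro sum_mono mult_left_mono) auto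
  then have "1 \<le> ?Z"
    by (simp add: p_sum)
  then have "ln ?Z \<le> ?Z - 1"
    by (intro ln_le_minus_one) simp
  also have "?Z \<le> (\<Sum>a\<in>UNIV. p a * (1 + \<beta> * g a + \<beta>\<^sup>2 * M\<^sup>2))"
    using exp_le p_nonneg by (intro sum_mono mult_left_mono)
  also have "\<dots> = (\<Sum>a\<in>UNIV. p a) + \<beta> * (\<Sum>a\<in>UNIV. p a * g a) + (\<Sum>a\<in>UNIV. p a) * \<beta>\<^sup>2 * M\<^sup>2"
    by (simp add: distrib_left sum.distrib sum_distrib_left sum_distrib_right mult_ac)
  finally show ?thesis by (simp add: p_sum)
qed

lemma exp_weights_iterates_positive:
  fixes p g :: "nat \<Rightarrow> 'a::finite \<Rightarrow> real"
  assumes p1: "\<And>a. 0 < p 1 a" "(\<Sum>a\<in>UNIV. p 1 a) = 1"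
    and update: "\<And>t a. t \<in> {1..T} \<Longrightarrow>
      p (Suc t) a = p t a * exp (\<beta> * g t a) / (\<Sum>b\<in>UNIV. p t b * exp (\<beta> * g t b))"
  shows "1 \<le> t \<Longrightarrow> t \<le> Suc T \<Longrightarrow> (\<forall>a. 0 < p t a) \<and> (\<Sum>a\<in>UNIV. p t a) = 1"
proof (induction t rule: nat_induct_at_least)
  case (Suc t)
  then have "\<forall>a. 0 < p t a" and "t \<in> {1..T}" by auto
  with update show ?case
    using exp_weights_dist[where p = "p t" and w = "\<lambda>a. \<beta> * g t a"] by simp
qed (use p1 in auto)

lemma exp_weights_regret:
  fixes p g :: "nat \<Rightarrow> 'a::finite \<Rightarrow> real"
  assumes p1: "\<And>a. p_low \<le> p 1 a" "0 < p_low" "(\<Sum>a\<in>UNIV. p 1 a) = 1"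
    and update: "\<And>t a. t \<in> {1..T} \<Longrightarrow>
      p (Suc t) a = p t a * exp (\<beta> * g t a) / (\<Sum>b\<in>UNIV. p t b * exp (\<beta> * g t b))"
    and g: "\<And>t a. t \<in> {1..T} \<Longrightarrow> 0 \<le> g t a" "\<And>t a. t \<in> {1..T} \<Longrightarrow> g t a \<le> M"
    and \<beta>: "0 < \<beta>" "\<beta> * M \<le> 1"
  shows "(\<Sum>t=1..T. g t a0 - (\<Sum>b\<in>UNIV. p t b * g t b)) \<le> ln (1 / p_low) / \<beta> + \<beta> * real T * M\<^sup>2"
proof -
  define Z where "Z t = (\<Sum>b\<in>UNIV. p t b * exp (\<beta> * g t b))" for t
  have iterate: "(\<forall>a. 0 < p t a) \<and> (\<Sum>a\<in>UNIV. p t a) = 1" if "1 \<le> t" "t \<le> Suc T" for t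
    using exp_weights_iterates_positive[of p, OF _ p1(3) update that] p1(1,2)
    by (meson less_le_trans)
  have ln_step: "ln (p (Suc t) a0) - ln (p t a0) = \<beta> * g t a0 - ln (Z t)" if t: "t \<in> {1..T}" for t
  proof -
    have "0 < p t a" for a
      using iterate t by auto
    then have "0 < Z t"
      unfolding Z_def by (intro sum_pos) auto
    then show ?thesis
      using update[OF t] \<open>0 < p t a0\<close> by (simp add: Z_def ln_div ln_mult)
  qed
  have ln_Z: "ln (Z t) \<le> \<beta> * (\<Sum>b\<in>UNIV. p t b * g t b) + \<beta>\<^sup>2 * M\<^sup>2" if t: "t \<in> {1..T}" for t
    unfolding Z_def using iterate t g[OF t] \<beta>
    by (intro ln_exp_weights_normalizer_le) (auto simp: is_dist_def less_imp_le)
  have "\<beta> * (\<Sum>t=1..T. g t a0 - (\<Sum>b\<in>UNIV. p t b * g t b)) - real T * \<beta>\<^sup>2 * M\<^sup>2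
      = (\<Sum>t=1..T. \<beta> * (g t a0 - (\<Sum>b\<in>UNIV. p t b * g t b)) - \<beta>\<^sup>2 * M\<^sup>2)"
    by (simp add: sum_subtractf sum_distrib_left right_diff_distrib)
  also have "\<dots> \<le> (\<Sum>t=1..T. ln (p (Suc t) a0) - ln (p t a0))"
    using ln_step ln_Z by (intro sum_mono) (fastforce simp: algebra_simps)
  also have "\<dots> = ln (p (Suc T) a0) - ln (p 1 a0)"
    by (rule sum_Suc_diff) simp
  also have "\<dots> \<le> ln (1 / p_low)"
  proof -
    have "p (Suc T) a0 \<le> (\<Sum>a\<in>UNIV. p (Suc T) a)"
      using iterate[of "Suc T"] by (intro member_le_sum) (auto intro: less_imp_le)
    then have "ln (p (Suc T) a0) \<le> 0"
      using iterate[of "Suc T"] by simp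
    moreover have "ln p_low \<le> ln (p 1 a0)"
      using p1(1)[of a0] p1(2) by simp
    ultimately show ?thesis
      using p1(2) by (simp add: ln_div)
  qed
  finally have "\<beta> * (\<Sum>t=1..T. g t a0 - (\<Sum>b\<in>UNIV. p t b * g t b)) \<le> ln (1 / p_low) + \<beta> * (\<beta> * real T * M\<^sup>2)"
    by (simp add: power2_eq_square algebra_simps)
  then show ?thesis
    using \<beta>(1) by (simp add: field_simps)
qed

section \<open>Values as sums of per-step rewards\<close>

lemma policy_nonneg: "\<pi> \<in> policies H \<Longrightarrow> 1 \<le> h \<Longrightarrow> h \<le> H \<Longrightarrow> 0 \<le> \<pi> h s a"
  by (auto simp: policies_def is_dist_def)

lemma policy_sum: "\<pi> \<in> policies H \<Longrightarrow> 1 \<le> h \<Longrightarrow> h \<le> H \<Longrightarrow> (\<Sum>a\<in>UNIV. \<pi> h s a) = 1"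
  by (auto simp: policies_def is_dist_def)

lemma sdist_cong:
  "(\<And>i. 0 < i \<Longrightarrow> i < h \<Longrightarrow> \<pi> i = \<pi>' i) \<Longrightarrow> sdist f \<pi> s0 h s = sdist f \<pi>' s0 h s"
  by (induction h arbitrary: s rule: induct_nat_012) simp_all

lemma QQ_cong:
  "(\<And>i. h < i \<Longrightarrow> i \<le> h + n \<Longrightarrow> \<pi> i = \<pi>' i) \<Longrightarrow>
    QQ f r \<pi> \<sigma> n h s a s' a' = QQ f r \<pi>' \<sigma> n h s a s' a'"
proof (induction n arbitrary: h s a s' a')
  case (Suc n)
  then have "\<pi> (Suc h) = \<pi>' (Suc h)" and "QQ f r \<pi> \<sigma> n (Suc h) = QQ f r \<pi>' \<sigma> n (Suc h)"
    by (auto intro!: ext)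
  then show ?case
    by (simp only: QQ.simps)
qed simp

definition step_exp :: "('s::finite \<Rightarrow> 'a::finite \<Rightarrow> 's \<Rightarrow> real) \<Rightarrow> ('s, 'a) policy \<Rightarrow> ('s, 'a) policy
    \<Rightarrow> nat \<Rightarrow> 's \<Rightarrow> ('s \<Rightarrow> 'a \<Rightarrow> 's \<Rightarrow> 'a \<Rightarrow> real) \<Rightarrow> real" where
  "step_exp f \<sigma> \<pi> h s0 g = (\<Sum>s\<in>UNIV. \<Sum>a\<in>UNIV. \<Sum>s'\<in>UNIV. \<Sum>a'\<in>UNIV.
      occ_cond f \<sigma> h s0 s a * occ_cond f \<pi> h s0 s' a' * g s a s' a')"

lemma sum_occ_cond_1:
  "(\<Sum>s\<in>UNIV. \<Sum>a\<in>UNIV. occ_cond f \<pi> (Suc 0) s0 s a * F s a) = (\<Sum>a\<in>UNIV. \<pi> (Suc 0) s0 a * F s0 a)"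
proof -
  have "(\<Sum>s\<in>UNIV. \<Sum>a\<in>UNIV. occ_cond f \<pi> (Suc 0) s0 s a * F s a)
      = (\<Sum>s\<in>UNIV. if s = s0 then \<Sum>a\<in>UNIV. \<pi> (Suc 0) s a * F s a else 0)"
    by (intro sum.cong refl) (simp add: occ_cond_def)
  then show ?thesis
    by simp
qed

lemma step_exp_1:
  "step_exp f \<sigma> \<pi> (Suc 0) s0 g = (\<Sum>a\<in>UNIV. \<Sum>a'\<in>UNIV. \<sigma> (Suc 0) s0 a * \<pi> (Suc 0) s0 a' * g s0 a s0 a')"
proof -
  have "step_exp f \<sigma> \<pi> (Suc 0) s0 g = (\<Sum>s\<in>UNIV. \<Sum>a\<in>UNIV. occ_cond f \<sigma> (Suc 0) s0 s a *
          (\<Sum>s'\<in>UNIV. \<Sum>a'\<in>UNIV. occ_cond f \<pi> (Suc 0) s0 s' a' * g s a s' a'))"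
    by (simp add: step_exp_def sum_distrib_left mult.assoc)
  also have "\<dots> = (\<Sum>a\<in>UNIV. \<sigma> (Suc 0) s0 a * (\<Sum>a'\<in>UNIV. \<pi> (Suc 0) s0 a' * g s0 a s0 a'))"
    by (simp only: sum_occ_cond_1)
  finally show ?thesis
    by (simp add: sum_distrib_left mult.assoc)
qed

lemma step_exp_QQ_Suc:
  "step_exp f \<sigma> \<pi> (Suc h) s0 (QQ f r \<sigma> \<pi> (Suc n) (Suc h))
    = step_exp f \<sigma> \<pi> (Suc h) s0 r + step_exp f \<sigma> \<pi> (Suc (Suc h)) s0 (QQ f r \<sigma> \<pi> n (Suc (Suc h)))"
proof -
  define C where "C x x' = (\<Sum>b\<in>UNIV. \<Sum>b'\<in>UNIV.
    \<sigma> (Suc (Suc h)) x b * \<pi> (Suc (Suc h)) x' b' * QQ f r \<sigma> \<pi> n (Suc (Suc h)) x b x' b')" for x x'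
  have "step_exp f \<sigma> \<pi> (Suc h) s0 (QQ f r \<sigma> \<pi> (Suc n) (Suc h))
      = step_exp f \<sigma> \<pi> (Suc h) s0 r + (\<Sum>s\<in>UNIV. \<Sum>a\<in>UNIV. \<Sum>s'\<in>UNIV. \<Sum>a'\<in>UNIV.
          occ_cond f \<sigma> (Suc h) s0 s a * occ_cond f \<pi> (Suc h) s0 s' a' *
          (\<Sum>x\<in>UNIV. \<Sum>x'\<in>UNIV. f s a x * f s' a' x' * C x x'))"
    by (simp add: step_exp_def C_def distrib_left sum.distrib)
  also have "(\<Sum>s\<in>UNIV. \<Sum>a\<in>UNIV. \<Sum>s'\<in>UNIV. \<Sum>a'\<in>UNIV.
          occ_cond f \<sigma> (Suc h) s0 s a * occ_cond f \<pi> (Suc h) s0 s' a' *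
          (\<Sum>x\<in>UNIV. \<Sum>x'\<in>UNIV. f s a x * f s' a' x' * C x x'))
      = (\<Sum>x\<in>UNIV. \<Sum>x'\<in>UNIV. sdist f \<sigma> s0 (Suc (Suc h)) x * sdist f \<pi> s0 (Suc (Suc h)) x' * C x x')"
    by (simp only: sum_pairs_push_transition) (simp add: occ_cond_def)
  also have "\<dots> = step_exp f \<sigma> \<pi> (Suc (Suc h)) s0 (QQ f r \<sigma> \<pi> n (Suc (Suc h)))"
    unfolding step_exp_def
  proof (rule sum.cong[OF refl])
    fix x
    show "(\<Sum>x'\<in>UNIV. sdist f \<sigma> s0 (Suc (Suc h)) x * sdist f \<pi> s0 (Suc (Suc h)) x' * C x x')
        = (\<Sum>b\<in>UNIV. \<Sum>x'\<in>UNIV. \<Sum>b'\<in>UNIV. occ_cond f \<sigma> (Suc (Suc h)) s0 x b *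
            occ_cond f \<pi> (Suc (Suc h)) s0 x' b' * QQ f r \<sigma> \<pi> n (Suc (Suc h)) x b x' b')"
      by (subst sum.swap) (simp only: C_def occ_cond_def sum_distrib_left mult_ac)
  qed
  finally show ?thesis .
qed

lemma val_split:
  assumes "1 \<le> k" "k \<le> H"
  shows "val f r \<nu>1 H \<sigma> \<pi> = (\<Sum>j=1..<k. \<Sum>s0\<in>UNIV. \<nu>1 s0 * step_exp f \<sigma> \<pi> j s0 r)
     + (\<Sum>s0\<in>UNIV. \<nu>1 s0 * step_exp f \<sigma> \<pi> k s0 (QQ f r \<sigma> \<pi> (H - k) k))"
  using assms
proof (induction k rule: nat_induct_at_least)
  case base
  then show ?case
    by (simp add: val_def Vfun_def Qfun_def step_exp_1)
next
  case (Suc k)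
  then obtain m where k: "k = Suc m" and H_k: "H - Suc m = Suc (H - Suc (Suc m))"
    by (cases k) auto
  have "step_exp f \<sigma> \<pi> k s0 (QQ f r \<sigma> \<pi> (H - k) k)
      = step_exp f \<sigma> \<pi> k s0 r + step_exp f \<sigma> \<pi> (Suc k) s0 (QQ f r \<sigma> \<pi> (H - Suc k) (Suc k))" for s0
    unfolding k H_k by (rule step_exp_QQ_Suc)
  then show ?case
    using Suc by (simp add: distrib_left sum.distrib)
qed

lemma val_eq_sum_step_exp:
  assumes "1 \<le> H"
  shows "val f r \<nu>1 H \<sigma> \<pi> = (\<Sum>j=1..H. \<Sum>s0\<in>UNIV. \<nu>1 s0 * step_exp f \<sigma> \<pi> j s0 r)"
proof -
  have "QQ f r \<sigma> \<pi> 0 H = r"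
    by (intro ext) simp
  then have "val f r \<nu>1 H \<sigma> \<pi> = (\<Sum>j=1..<H. \<Sum>s0\<in>UNIV. \<nu>1 s0 * step_exp f \<sigma> \<pi> j s0 r)
      + (\<Sum>s0\<in>UNIV. \<nu>1 s0 * step_exp f \<sigma> \<pi> H s0 r)"
    using val_split[of H H f r \<nu>1 \<sigma> \<pi>] assms by simp
  also have "\<dots> = (\<Sum>j=1..H. \<Sum>s0\<in>UNIV. \<nu>1 s0 * step_exp f \<sigma> \<pi> j s0 r)"
    using assms by (simp add: sum.last_plus atLeastLessThan_nat_numeral)
  finally show ?thesis .
qed

section \<open>Occupancy measures\<close>

definition state_occ :: "('s::finite \<Rightarrow> 'a::finite \<Rightarrow> 's \<Rightarrow> real) \<Rightarrow> ('s \<Rightarrow> real) \<Rightarrow> ('s, 'a) policy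
    \<Rightarrow> nat \<Rightarrow> 's \<Rightarrow> real" where
  "state_occ f \<nu>1 \<pi> h s = (\<Sum>s0\<in>UNIV. \<nu>1 s0 * sdist f \<pi> s0 h s)"

lemma occ_eq_state_occ: "occ f \<nu>1 \<pi> h s a = state_occ f \<nu>1 \<pi> h s * \<pi> h s a"
  unfolding occ_def occ_cond_def state_occ_def sum_distrib_right by (simp only: mult.assoc)

lemma state_occ_1: "state_occ f \<nu>1 \<pi> (Suc 0) s = \<nu>1 s"
  by (simp add: state_occ_def if_distrib cong: if_cong)

lemma state_occ_Suc:
  "state_occ f \<nu>1 \<pi> (Suc (Suc h)) s'
    = (\<Sum>s\<in>UNIV. \<Sum>a\<in>UNIV. state_occ f \<nu>1 \<pi> (Suc h) s * \<pi> (Suc h) s a * f s a s')"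
proof -
  have "state_occ f \<nu>1 \<pi> (Suc (Suc h)) s'
      = (\<Sum>s0\<in>UNIV. \<Sum>s\<in>UNIV. \<Sum>a\<in>UNIV. \<nu>1 s0 * sdist f \<pi> s0 (Suc h) s * \<pi> (Suc h) s a * f s a s')"
    unfolding state_occ_def sdist.simps sum_distrib_left by (simp only: mult.assoc)
  also have "\<dots> = (\<Sum>s\<in>UNIV. \<Sum>a\<in>UNIV. \<Sum>s0\<in>UNIV. \<nu>1 s0 * sdist f \<pi> s0 (Suc h) s * \<pi> (Suc h) s a * f s a s')"
    by (subst sum.swap, rule sum.cong[OF refl], rule sum.swap)
  finally show ?thesis
    unfolding state_occ_def sum_distrib_right .
qed

lemma policy_of_occupancy:
  fixes D :: "nat \<Rightarrow> 's::finite \<Rightarrow> 'a::finite \<Rightarrow> real"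
  assumes D_nonneg: "\<And>h s a. 1 \<le> h \<Longrightarrow> h \<le> H \<Longrightarrow> 0 \<le> D h s a"
    and D_init: "\<And>s. (\<Sum>a\<in>UNIV. D 1 s a) = \<nu>1 s"
    and D_flow: "\<And>h s'. 1 \<le> h \<Longrightarrow> h < H \<Longrightarrow> (\<Sum>a\<in>UNIV. D (Suc h) s' a) = (\<Sum>s\<in>UNIV. \<Sum>a\<in>UNIV. D h s a * f s a s')"
  shows "\<exists>\<pi>\<in>policies H. \<forall>h\<in>{1..H}. \<forall>s a. occ f \<nu>1 \<pi> h s a = D h s a"
proof -
  define Ds where "Ds h s = (\<Sum>a\<in>UNIV. D h s a)" for h s
  define \<pi> :: "('s, 'a) policy"
    where "\<pi> h s a = (if 0 < Ds h s then D h s a / Ds h s else 1 / real (card (UNIV :: 'a set)))" for h s a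
  have Ds_\<pi>: "Ds h s * \<pi> h s a = D h s a" if h: "1 \<le> h" "h \<le> H" for h s a
  proof (cases "0 < Ds h s")
    case False
    moreover have "0 \<le> Ds h s"
      unfolding Ds_def using D_nonneg[OF h] by (intro sum_nonneg)
    ultimately have "Ds h s = 0"
      by simp
    then have "D h s a = 0"
      unfolding Ds_def using D_nonneg[OF h] by (simp add: sum_nonneg_eq_0_iff)
    with \<open>Ds h s = 0\<close> show ?thesis
      by simp
  qed (simp add: \<pi>_def)
  have "(\<Sum>a\<in>UNIV. \<pi> h s a) = 1" for h s
  proof (cases "0 < Ds h s")
    case True
    then have "(\<Sum>a\<in>UNIV. \<pi> h s a) = Ds h s / Ds h s"
      by (simp add: \<pi>_def sum_divide_distrib[symmetric] Ds_def[symmetric])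
    with True show ?thesis
      by simp
  qed (simp add: \<pi>_def)
  moreover have "0 \<le> \<pi> h s a" if "1 \<le> h" "h \<le> H" for h s a
    using D_nonneg[OF that] by (simp add: \<pi>_def)
  ultimately have "\<pi> \<in> policies H"
    by (simp add: policies_def is_dist_def)
  moreover have "state_occ f \<nu>1 \<pi> h s = Ds h s" if "1 \<le> h" "h \<le> H" for h s
    using that
  proof (induction h arbitrary: s rule: nat_induct_at_least)
    case base
    then show ?case
      using D_init[of s] by (simp add: state_occ_1 Ds_def)
  next
    case (Suc h)
    then obtain m where h: "h = Suc m"
      by (cases h) auto
    have "state_occ f \<nu>1 \<pi> (Suc h) s = (\<Sum>x\<in>UNIV. \<Sum>a\<in>UNIV. Ds h x * \<pi> h x a * f x a s)"
      using Suc by (simp add: h state_occ_Suc)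
    also have "\<dots> = Ds (Suc h) s"
      using Suc by (simp add: Ds_\<pi> D_flow Ds_def[of "Suc h"])
    finally show ?case .
  qed
  ultimately show ?thesis
    using Ds_\<pi> by (intro bexI[of _ \<pi>]) (auto simp: occ_eq_state_occ)
qed

(* The opponent enters only through its occupancy measure d: sigma is run from the
   initial state s1 s' determined by the opponent's state s'. *)
definition val_occ :: "('s::finite \<Rightarrow> 'a::finite \<Rightarrow> 's \<Rightarrow> real) \<Rightarrow> ('s \<Rightarrow> 'a \<Rightarrow> 's \<Rightarrow> 'a \<Rightarrow> real) \<Rightarrow> nat
    \<Rightarrow> ('s \<Rightarrow> 's) \<Rightarrow> ('s, 'a) policy \<Rightarrow> (nat \<Rightarrow> 's \<Rightarrow> 'a \<Rightarrow> real) \<Rightarrow> real" where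
  "val_occ f r H s1 \<sigma> d = (\<Sum>j=1..H. \<Sum>s'\<in>UNIV. \<Sum>a'\<in>UNIV.
      d j s' a' * (\<Sum>s\<in>UNIV. \<Sum>a\<in>UNIV. occ_cond f \<sigma> j (s1 s') s a * r s a s' a'))"

lemma val_occ_average:
  assumes "finite A" and d: "\<And>j s a. 1 \<le> j \<Longrightarrow> j \<le> H \<Longrightarrow> d j s a = c * (\<Sum>t\<in>A. e t j s a)"
  shows "val_occ f r H s1 \<sigma> d = c * (\<Sum>t\<in>A. val_occ f r H s1 \<sigma> (e t))"
proof -
  have scale: "val_occ f r H s1 \<sigma> (\<lambda>j s a. c * g j s a) = c * val_occ f r H s1 \<sigma> g" for g
    by (simp add: val_occ_def sum_distrib_left mult.assoc)
  have "val_occ f r H s1 \<sigma> d = val_occ f r H s1 \<sigma> (\<lambda>j s a. c * (\<Sum>t\<in>A. e t j s a))"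
    unfolding val_occ_def using d by (intro sum.cong refl) auto
  also have "\<dots> = c * val_occ f r H s1 \<sigma> (\<lambda>j s a. \<Sum>t\<in>A. e t j s a)"
    by (rule scale)
  also have "val_occ f r H s1 \<sigma> (\<lambda>j s a. \<Sum>t\<in>A. e t j s a) = (\<Sum>t\<in>A. val_occ f r H s1 \<sigma> (e t))"
    using \<open>finite A\<close> by induction (simp_all add: val_occ_def distrib_right sum.distrib)
  finally show ?thesis .
qed

section \<open>Hybrid policies\<close>

definition hybrid :: "nat \<Rightarrow> ('s, 'a) policy \<Rightarrow> ('s, 'a) policy \<Rightarrow> ('s, 'a) policy" where
  "hybrid k \<sigma> \<pi> = (\<lambda>h. if 0 < h \<and> h < k then \<sigma> h else \<pi> h)"

lemma hybrid_1: "hybrid (Suc 0) \<sigma> \<pi> = \<pi>"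
  by (auto simp: hybrid_def)

lemma sdist_hybrid: "h \<le> k \<Longrightarrow> sdist f (hybrid k \<sigma> \<pi>) s0 h s = sdist f \<sigma> s0 h s"
  by (rule sdist_cong) (auto simp: hybrid_def)

lemma occ_cond_hybrid: "0 < h \<Longrightarrow> h < k \<Longrightarrow> occ_cond f (hybrid k \<sigma> \<pi>) h s0 s a = occ_cond f \<sigma> h s0 s a"
  by (simp add: occ_cond_def sdist_hybrid) (simp add: hybrid_def)

lemma QQ_hybrid: "k \<le> Suc h \<Longrightarrow> QQ f r (hybrid k \<sigma> \<pi>) \<pi>' n h s a s' a' = QQ f r \<pi> \<pi>' n h s a s' a'"
  by (rule QQ_cong) (auto simp: hybrid_def)

lemma val_hybrid_Suc_diff:
  assumes k: "1 \<le> k" "k \<le> H"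
  shows "val f r \<nu>1 H (hybrid (Suc k) \<sigma> \<pi>) \<pi> - val f r \<nu>1 H (hybrid k \<sigma> \<pi>) \<pi>
    = (\<Sum>s0\<in>UNIV. \<nu>1 s0 * (\<Sum>s\<in>UNIV. \<Sum>a\<in>UNIV. \<Sum>s'\<in>UNIV. \<Sum>a'\<in>UNIV.
        sdist f \<sigma> s0 k s * (\<sigma> k s a - \<pi> k s a) * occ_cond f \<pi> k s0 s' a' * Qfun f r H \<pi> \<pi> k s a s' a'))"
proof -
  have prefix: "step_exp f (hybrid (Suc k) \<sigma> \<pi>) \<pi> j s0 r = step_exp f (hybrid k \<sigma> \<pi>) \<pi> j s0 r"
    if "j \<in> {1..<k}" for j s0
    using that by (simp add: step_exp_def occ_cond_hybrid)
  have step_k: "step_exp f (hybrid k' \<sigma> \<pi>) \<pi> k s0 (QQ f r (hybrid k' \<sigma> \<pi>) \<pi> (H - k) k)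
      = (\<Sum>s\<in>UNIV. \<Sum>a\<in>UNIV. \<Sum>s'\<in>UNIV. \<Sum>a'\<in>UNIV.
          sdist f \<sigma> s0 k s * hybrid k' \<sigma> \<pi> k s a * occ_cond f \<pi> k s0 s' a' * Qfun f r H \<pi> \<pi> k s a s' a')"
    if "k' \<in> {k, Suc k}" for k' s0
    using that by (auto simp: step_exp_def Qfun_def occ_cond_def sdist_hybrid QQ_hybrid)
  have "val f r \<nu>1 H (hybrid (Suc k) \<sigma> \<pi>) \<pi> - val f r \<nu>1 H (hybrid k \<sigma> \<pi>) \<pi>
      = (\<Sum>s0\<in>UNIV. \<nu>1 s0 * (\<Sum>s\<in>UNIV. \<Sum>a\<in>UNIV. \<Sum>s'\<in>UNIV. \<Sum>a'\<in>UNIV.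
          sdist f \<sigma> s0 k s * \<sigma> k s a * occ_cond f \<pi> k s0 s' a' * Qfun f r H \<pi> \<pi> k s a s' a'))
       - (\<Sum>s0\<in>UNIV. \<nu>1 s0 * (\<Sum>s\<in>UNIV. \<Sum>a\<in>UNIV. \<Sum>s'\<in>UNIV. \<Sum>a'\<in>UNIV.
          sdist f \<sigma> s0 k s * \<pi> k s a * occ_cond f \<pi> k s0 s' a' * Qfun f r H \<pi> \<pi> k s a s' a'))"
    using k by (simp add: val_split[OF k] prefix step_k) (simp add: hybrid_def)
  also have "\<dots> = (\<Sum>s0\<in>UNIV. \<nu>1 s0 * (\<Sum>s\<in>UNIV. \<Sum>a\<in>UNIV. \<Sum>s'\<in>UNIV. \<Sum>a'\<in>UNIV.
        sdist f \<sigma> s0 k s * (\<sigma> k s a - \<pi> k s a) * occ_cond f \<pi> k s0 s' a' * Qfun f r H \<pi> \<pi> k s a s' a'))"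
    by (simp add: left_diff_distrib right_diff_distrib sum_subtractf)
  finally show ?thesis .
qed

definition mpo_payoff :: "('s::finite \<Rightarrow> 'a::finite \<Rightarrow> 's \<Rightarrow> real) \<Rightarrow> ('s \<Rightarrow> 'a \<Rightarrow> 's \<Rightarrow> 'a \<Rightarrow> real) \<Rightarrow> nat
    \<Rightarrow> ('s \<Rightarrow> 's) \<Rightarrow> ('s, 'a) policy \<Rightarrow> nat \<Rightarrow> 's \<Rightarrow> 'a \<Rightarrow> real" where
  "mpo_payoff f r H s1 \<pi> h s a =
    (\<Sum>s'\<in>UNIV. \<Sum>a'\<in>UNIV. occ_cond f \<pi> h (s1 s) s' a' * Qfun f r H \<pi> \<pi> h s a s' a')"

lemma mpo_update_eq:
  "mpo_update f r H s1 \<beta> \<pi> h s a = \<pi> h s a * exp (\<beta> * mpo_payoff f r H s1 \<pi> h s a)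
    / (\<Sum>b\<in>UNIV. \<pi> h s b * exp (\<beta> * mpo_payoff f r H s1 \<pi> h s b))"
  by (simp add: mpo_update_def mpo_payoff_def)

lemma mpo_iterates_policies:
  assumes \<pi>1: "\<pi>s 1 \<in> policies H" "\<And>h s a. 1 \<le> h \<Longrightarrow> h \<le> H \<Longrightarrow> 0 < \<pi>s 1 h s a"
    and step: "\<And>t. t \<in> {1..T} \<Longrightarrow> \<pi>s (Suc t) = mpo_update f r H s1 \<beta> (\<pi>s t)"
    and t: "1 \<le> t" "t \<le> Suc T"
  shows "\<pi>s t \<in> policies H"
proof -
  have "(\<forall>a. 0 < \<pi>s t h s a) \<and> (\<Sum>a\<in>UNIV. \<pi>s t h s a) = 1" if h: "1 \<le> h" "h \<le> H" for h s
  proof (rule exp_weights_iterates_positive[OF _ _ _ t])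
    show "0 < \<pi>s 1 h s a" for a
      using \<pi>1(2)[OF h] .
    show "(\<Sum>a\<in>UNIV. \<pi>s 1 h s a) = 1"
      using policy_sum[OF \<pi>1(1) h] .
    show "\<pi>s (Suc t) h s a = \<pi>s t h s a * exp (\<beta> * mpo_payoff f r H s1 (\<pi>s t) h s a)
        / (\<Sum>b\<in>UNIV. \<pi>s t h s b * exp (\<beta> * mpo_payoff f r H s1 (\<pi>s t) h s b))"
      if "t \<in> {1..T}" for t a
      using step[OF that] by (simp add: mpo_update_eq)
  qed
  then show ?thesis
    by (auto simp: policies_def is_dist_def less_imp_le)
qed

lemma mpo_step_size:
  fixes H T \<epsilon> L :: real
  assumes H: "0 < H" and T: "0 < T" and \<epsilon>: "0 < \<epsilon>" and T_eq: "T = 16 * H ^ 4 * L / \<epsilon> ^ 2"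
  defines "\<beta> \<equiv> sqrt (L / (T * H ^ 2))"
  shows "\<beta> = \<epsilon> / (4 * H ^ 3)" and "H * (L / \<beta> + \<beta> * T * H ^ 2) / T = \<epsilon> / 2"
proof -
  have L: "L = T * \<epsilon> ^ 2 / (16 * H ^ 4)"
    using T_eq H \<epsilon> by (simp add: field_simps)
  have "L / (T * H ^ 2) = (\<epsilon> / (4 * H ^ 3))\<^sup>2"
    using H T by (simp add: L field_simps eval_nat_numeral)
  then show \<beta>: "\<beta> = \<epsilon> / (4 * H ^ 3)"
    using H \<epsilon> by (simp add: \<beta>_def)
  have "L / \<beta> = \<beta> * T * H ^ 2"
    using H T \<epsilon> by (simp add: L \<beta> field_simps eval_nat_numeral)
  then show "H * (L / \<beta> + \<beta> * T * H ^ 2) / T = \<epsilon> / 2"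
    using H T \<epsilon> by (simp add: \<beta> field_simps eval_nat_numeral)
qed

locale finite_mdp =
  fixes f :: "'s::finite \<Rightarrow> 'a::finite \<Rightarrow> 's \<Rightarrow> real" and H :: nat
  assumes kernel: "\<And>s a. is_dist (f s a)"
begin

lemma trans_nonneg: "0 \<le> f s a s'"
  using kernel by (simp add: is_dist_def)

lemma trans_sum: "(\<Sum>s'\<in>UNIV. f s a s') = 1"
  using kernel by (simp add: is_dist_def)

lemma sdist_nonneg: "\<pi> \<in> policies H \<Longrightarrow> h \<le> Suc H \<Longrightarrow> 0 \<le> sdist f \<pi> s0 h s"
proof (induction h arbitrary: s rule: induct_nat_012)
  case (ge2 h)
  then show ?case
    using policy_nonneg[OF ge2.prems(1)] trans_nonneg by (auto intro!: sum_nonneg mult_nonneg_nonneg)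
qed simp_all

lemma sdist_sum: "\<pi> \<in> policies H \<Longrightarrow> 1 \<le> h \<Longrightarrow> h \<le> Suc H \<Longrightarrow> (\<Sum>s\<in>UNIV. sdist f \<pi> s0 h s) = 1"
proof (induction h rule: induct_nat_012)
  case (ge2 h)
  have "(\<Sum>s'\<in>UNIV. sdist f \<pi> s0 (Suc (Suc h)) s')
      = (\<Sum>s'\<in>UNIV. \<Sum>s\<in>UNIV. \<Sum>a\<in>UNIV. sdist f \<pi> s0 (Suc h) s * \<pi> (Suc h) s a * f s a s')"
    by simp
  also have "\<dots> = (\<Sum>s\<in>UNIV. \<Sum>a\<in>UNIV. \<Sum>s'\<in>UNIV. sdist f \<pi> s0 (Suc h) s * \<pi> (Suc h) s a * f s a s')"
    by (subst sum.swap, rule sum.cong[OF refl], rule sum.swap)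
  also have "\<dots> = (\<Sum>s\<in>UNIV. \<Sum>a\<in>UNIV. sdist f \<pi> s0 (Suc h) s * \<pi> (Suc h) s a * (\<Sum>s'\<in>UNIV. f s a s'))"
    by (simp add: sum_distrib_left)
  also have "\<dots> = (\<Sum>s\<in>UNIV. sdist f \<pi> s0 (Suc h) s)"
    using ge2.prems by (simp add: trans_sum policy_sum flip: sum_distrib_left)
  also have "\<dots> = 1"
    using ge2 by simp
  finally show ?case .
qed simp_all

lemma sdist_nonzero_reach: "sdist f \<pi> s0 h s \<noteq> 0 \<Longrightarrow> s \<in> reach f s0 h"
proof (induction h arbitrary: s rule: induct_nat_012)
  case (ge2 h s')
  then obtain s a where "sdist f \<pi> s0 (Suc h) s * \<pi> (Suc h) s a * f s a s' \<noteq> 0"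
    by (auto elim!: sum.not_neutral_contains_not_neutral)
  then have "s \<in> reach f s0 (Suc h)" and "0 < f s a s'"
    using ge2.IH(2) trans_nonneg[of s a s'] by auto
  then show ?case
    by auto
qed (simp_all split: if_splits)

lemma occ_cond_nonneg: "\<pi> \<in> policies H \<Longrightarrow> 1 \<le> h \<Longrightarrow> h \<le> H \<Longrightarrow> 0 \<le> occ_cond f \<pi> h s0 s a"
  unfolding occ_cond_def by (simp add: sdist_nonneg policy_nonneg)

lemma occ_cond_sum:
  "\<pi> \<in> policies H \<Longrightarrow> 1 \<le> h \<Longrightarrow> h \<le> H \<Longrightarrow> (\<Sum>s\<in>UNIV. \<Sum>a\<in>UNIV. occ_cond f \<pi> h s0 s a) = 1"
  unfolding occ_cond_def by (simp add: policy_sum sdist_sum flip: sum_distrib_left)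

end

section \<open>Symmetric preference games\<close>

locale preference_game = finite_mdp f H
  for f :: "'s::finite \<Rightarrow> 'a::finite \<Rightarrow> 's \<Rightarrow> real" and H :: nat +
  fixes \<nu>1 :: "'s \<Rightarrow> real" and r :: "'s \<Rightarrow> 'a \<Rightarrow> 's \<Rightarrow> 'a \<Rightarrow> real"
  assumes init: "is_dist \<nu>1"
    and r_nonneg: "\<And>s a s' a'. 0 \<le> r s a s' a'"
    and r_le_1: "\<And>s a s' a'. r s a s' a' \<le> 1"
    and r_antisym: "\<And>s a s' a'. r s a s' a' = 1 - r s' a' s a"
    and horizon_pos: "1 \<le> H"
begin

lemma init_nonneg: "0 \<le> \<nu>1 s"
  using init by (simp add: is_dist_def)

lemma init_sum: "(\<Sum>s\<in>UNIV. \<nu>1 s) = 1"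
  using init by (simp add: is_dist_def)

lemma r_add_swap: "r s a s' a' + r s' a' s a = 1"
  using r_antisym[of s a s' a'] by simp

lemma QQ_bounds:
  assumes \<pi>: "\<pi> \<in> policies H" and \<sigma>: "\<sigma> \<in> policies H"
  shows "h + n \<le> H \<Longrightarrow> 0 \<le> QQ f r \<pi> \<sigma> n h s a s' a' \<and> QQ f r \<pi> \<sigma> n h s a s' a' \<le> real n + 1"
proof (induction n arbitrary: h s a s' a')
  case 0
  then show ?case
    using r_nonneg r_le_1 by simp
next
  case (Suc n)
  then have IH: "0 \<le> QQ f r \<pi> \<sigma> n (Suc h) x b x' b'" "QQ f r \<pi> \<sigma> n (Suc h) x b x' b' \<le> real n + 1"
    for x b x' b'
    by auto
  have dists: "is_dist (\<pi> (Suc h) x)" "is_dist (\<sigma> (Suc h) x)" for x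
    using \<pi> \<sigma> Suc.prems by (auto simp: policies_def)
  let ?E = "\<lambda>x x'. \<Sum>b\<in>UNIV. \<Sum>b'\<in>UNIV. \<pi> (Suc h) x b * \<sigma> (Suc h) x' b' * QQ f r \<pi> \<sigma> n (Suc h) x b x' b'"
  have "?E x x' \<le> real n + 1" for x x'
    using dists IH by (intro sum_product_dist_le) auto
  then have "(\<Sum>x\<in>UNIV. \<Sum>x'\<in>UNIV. f s a x * f s' a' x' * ?E x x') \<le> real n + 1"
    by (rule sum_product_dist_le[OF kernel kernel])
  moreover have "0 \<le> ?E x x'" for x x'
    using dists IH by (auto intro!: sum_nonneg simp: is_dist_def)
  then have "0 \<le> (\<Sum>x\<in>UNIV. \<Sum>x'\<in>UNIV. f s a x * f s' a' x' * ?E x x')"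
    using trans_nonneg by (auto intro!: sum_nonneg)
  ultimately show ?case
    using r_nonneg[of s a s' a'] r_le_1[of s a s' a'] by simp
qed

lemma Qfun_bounds:
  assumes "\<pi> \<in> policies H" "\<sigma> \<in> policies H" "1 \<le> h" "h \<le> H"
  shows "0 \<le> Qfun f r H \<pi> \<sigma> h s a s' a'" and "Qfun f r H \<pi> \<sigma> h s a s' a' \<le> real H"
proof -
  have "0 \<le> QQ f r \<pi> \<sigma> (H - h) h s a s' a' \<and> QQ f r \<pi> \<sigma> (H - h) h s a s' a' \<le> real (H - h) + 1"
    using QQ_bounds[OF assms(1,2), of h "H - h"] assms(4) by simp
  then show "0 \<le> Qfun f r H \<pi> \<sigma> h s a s' a'" and "Qfun f r H \<pi> \<sigma> h s a s' a' \<le> real H"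
    using assms(3,4) by (auto simp: Qfun_def)
qed

lemma step_exp_antisym:
  assumes "\<pi> \<in> policies H" "\<sigma> \<in> policies H" "1 \<le> j" "j \<le> H"
  shows "step_exp f \<sigma> \<pi> j s0 r + step_exp f \<pi> \<sigma> j s0 r = 1"
proof -
  have "step_exp f \<pi> \<sigma> j s0 r = (\<Sum>s\<in>UNIV. \<Sum>a\<in>UNIV. \<Sum>s'\<in>UNIV. \<Sum>a'\<in>UNIV.
      occ_cond f \<sigma> j s0 s a * occ_cond f \<pi> j s0 s' a' * r s' a' s a)"
    unfolding step_exp_def by (rule trans[OF sum_swap_pairs]) (simp only: mult_ac)
  then have "step_exp f \<sigma> \<pi> j s0 r + step_exp f \<pi> \<sigma> j s0 r = (\<Sum>s\<in>UNIV. \<Sum>a\<in>UNIV. \<Sum>s'\<in>UNIV. \<Sum>a'\<in>UNIV.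
      occ_cond f \<sigma> j s0 s a * occ_cond f \<pi> j s0 s' a')"
    unfolding step_exp_def by (simp add: r_add_swap flip: sum.distrib distrib_left)
  also have "\<dots> = 1"
    using assms by (simp add: sum_pairs_product occ_cond_sum)
  finally show ?thesis .
qed

lemma val_antisym:
  assumes "\<pi> \<in> policies H" "\<sigma> \<in> policies H"
  shows "val f r \<nu>1 H \<sigma> \<pi> + val f r \<nu>1 H \<pi> \<sigma> = real H"
proof -
  have "val f r \<nu>1 H \<sigma> \<pi> + val f r \<nu>1 H \<pi> \<sigma>
      = (\<Sum>j=1..H. \<Sum>s0\<in>UNIV. \<nu>1 s0 * (step_exp f \<sigma> \<pi> j s0 r + step_exp f \<pi> \<sigma> j s0 r))"
    by (simp add: val_eq_sum_step_exp[OF horizon_pos] distrib_left sum.distrib)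
  also have "\<dots> = real H"
    using assms by (simp add: step_exp_antisym init_sum)
  finally show ?thesis .
qed

corollary val_self: "\<pi> \<in> policies H \<Longrightarrow> val f r \<nu>1 H \<pi> \<pi> = real H / 2"
  using val_antisym[of \<pi> \<pi>] by simp

lemma val_nonneg:
  assumes "\<pi> \<in> policies H" "\<sigma> \<in> policies H"
  shows "0 \<le> val f r \<nu>1 H \<sigma> \<pi>"
  unfolding val_eq_sum_step_exp[OF horizon_pos] step_exp_def
  using assms by (intro sum_nonneg mult_nonneg_nonneg) (auto simp: init_nonneg occ_cond_nonneg r_nonneg)

lemma approx_NE_if_best_responses_bounded:
  assumes \<pi>: "\<pi> \<in> policies H" and bound: "\<And>\<sigma>. \<sigma> \<in> policies H \<Longrightarrow> val f r \<nu>1 H \<sigma> \<pi> \<le> real H / 2 + \<epsilon>"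
  shows "approx_NE f r \<nu>1 H \<epsilon> \<pi>"
proof -
  have nonempty: "policies H \<noteq> ({} :: ('s, 'a) policy set)"
    using \<pi> by blast
  have "real H / 2 - \<epsilon> \<le> (INF \<sigma>\<in>policies H. val f r \<nu>1 H \<pi> \<sigma>)"
  proof (rule cINF_greatest[OF nonempty])
    fix \<sigma> :: "('s, 'a) policy" assume "\<sigma> \<in> policies H"
    then show "real H / 2 - \<epsilon> \<le> val f r \<nu>1 H \<pi> \<sigma>"
      using val_antisym[OF \<pi>, of \<sigma>] bound[of \<sigma>] by simp
  qed
  moreover have "(SUP \<sigma>\<in>policies H. val f r \<nu>1 H \<sigma> \<pi>) \<le> real H / 2 + \<epsilon>"
    using bound by (rule cSUP_least[OF nonempty])
  ultimately show ?thesis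
    unfolding approx_NE_def val_self[OF \<pi>] by linarith
qed

lemma state_occ_nonneg: "\<pi> \<in> policies H \<Longrightarrow> h \<le> Suc H \<Longrightarrow> 0 \<le> state_occ f \<nu>1 \<pi> h s"
  unfolding state_occ_def by (simp add: sum_nonneg init_nonneg sdist_nonneg)

lemma state_occ_sum: "\<pi> \<in> policies H \<Longrightarrow> 1 \<le> h \<Longrightarrow> h \<le> Suc H \<Longrightarrow> (\<Sum>s\<in>UNIV. state_occ f \<nu>1 \<pi> h s) = 1"
  unfolding state_occ_def by (subst sum.swap) (simp add: sdist_sum init_sum flip: sum_distrib_left)

lemma occ_nonneg: "\<pi> \<in> policies H \<Longrightarrow> 1 \<le> h \<Longrightarrow> h \<le> H \<Longrightarrow> 0 \<le> occ f \<nu>1 \<pi> h s a"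
  by (simp add: occ_eq_state_occ state_occ_nonneg policy_nonneg)

lemma occ_init: "\<pi> \<in> policies H \<Longrightarrow> (\<Sum>a\<in>UNIV. occ f \<nu>1 \<pi> 1 s a) = \<nu>1 s"
  using horizon_pos by (simp add: occ_eq_state_occ state_occ_1 policy_sum flip: sum_distrib_left)

lemma occ_flow:
  assumes "\<pi> \<in> policies H" "1 \<le> h" "h < H"
  shows "(\<Sum>a\<in>UNIV. occ f \<nu>1 \<pi> (Suc h) s' a) = (\<Sum>s\<in>UNIV. \<Sum>a\<in>UNIV. occ f \<nu>1 \<pi> h s a * f s a s')"
proof -
  obtain m where h: "h = Suc m"
    using assms(2) by (cases h) auto
  have "(\<Sum>a\<in>UNIV. occ f \<nu>1 \<pi> (Suc h) s' a) = state_occ f \<nu>1 \<pi> (Suc h) s'"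
    using assms by (simp add: occ_eq_state_occ policy_sum flip: sum_distrib_left)
  then show ?thesis
    by (simp add: h state_occ_Suc occ_eq_state_occ)
qed

lemma averaged_policy_exists:
  assumes T: "1 \<le> T" and \<pi>s: "\<And>t. t \<in> {1..T} \<Longrightarrow> \<pi>s t \<in> policies H"
  shows "\<exists>\<pi>\<in>policies H. \<forall>h\<in>{1..H}. \<forall>s a.
           occ f \<nu>1 \<pi> h s a = (1 / real T) * (\<Sum>t=1..T. occ f \<nu>1 (\<pi>s t) h s a)"
proof (rule policy_of_occupancy)
  have swap: "(\<Sum>a\<in>UNIV. c * (\<Sum>t=1..T. g t a)) = c * (\<Sum>t=1..T. \<Sum>a\<in>UNIV. g t a)"
    for c and g :: "nat \<Rightarrow> 'a \<Rightarrow> real"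
    by (simp add: sum_distrib_left) (rule sum.swap)
  show "0 \<le> (1 / real T) * (\<Sum>t=1..T. occ f \<nu>1 (\<pi>s t) h s a)" if "1 \<le> h" "h \<le> H" for h s a
    using that \<pi>s by (intro mult_nonneg_nonneg sum_nonneg occ_nonneg) auto
  show "(\<Sum>a\<in>UNIV. (1 / real T) * (\<Sum>t=1..T. occ f \<nu>1 (\<pi>s t) 1 s a)) = \<nu>1 s" for s
  proof -
    have "(\<Sum>t=1..T. \<Sum>a\<in>UNIV. occ f \<nu>1 (\<pi>s t) 1 s a) = (\<Sum>t=1..T. \<nu>1 s)"
      using \<pi>s by (intro sum.cong refl occ_init) auto
    then show ?thesis
      using T by (simp only: swap) simp
  qed
  show "(\<Sum>a\<in>UNIV. (1 / real T) * (\<Sum>t=1..T. occ f \<nu>1 (\<pi>s t) (Suc h) s' a))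
      = (\<Sum>s\<in>UNIV. \<Sum>a\<in>UNIV. (1 / real T) * (\<Sum>t=1..T. occ f \<nu>1 (\<pi>s t) h s a) * f s a s')"
    if "1 \<le> h" "h < H" for h s'
  proof -
    have "(\<Sum>t=1..T. \<Sum>a\<in>UNIV. occ f \<nu>1 (\<pi>s t) (Suc h) s' a)
        = (\<Sum>t=1..T. \<Sum>s\<in>UNIV. \<Sum>a\<in>UNIV. occ f \<nu>1 (\<pi>s t) h s a * f s a s')"
      using that \<pi>s by (intro sum.cong refl occ_flow) auto
    also have "\<dots> = (\<Sum>s\<in>UNIV. \<Sum>a\<in>UNIV. (\<Sum>t=1..T. occ f \<nu>1 (\<pi>s t) h s a) * f s a s')"
      by (subst sum.swap, rule sum.cong[OF refl], subst sum.swap) (simp add: sum_distrib_right)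
    finally show ?thesis
      by (simp only: swap) (simp add: sum_distrib_left mult.assoc flip: sum_divide_distrib)
  qed
qed

lemma mpo_payoff_bounds:
  assumes "\<pi> \<in> policies H" "1 \<le> h" "h \<le> H"
  shows "0 \<le> mpo_payoff f r H s1 \<pi> h s a" and "mpo_payoff f r H s1 \<pi> h s a \<le> real H"
proof -
  have "mpo_payoff f r H s1 \<pi> h s a \<le> (\<Sum>s'\<in>UNIV. \<Sum>a'\<in>UNIV. occ_cond f \<pi> h (s1 s) s' a' * real H)"
    unfolding mpo_payoff_def using assms
    by (intro sum_mono mult_left_mono) (simp_all add: Qfun_bounds occ_cond_nonneg)
  also have "\<dots> = real H"
    using assms by (simp add: occ_cond_sum flip: sum_distrib_right)
  finally show "mpo_payoff f r H s1 \<pi> h s a \<le> real H" .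
  show "0 \<le> mpo_payoff f r H s1 \<pi> h s a"
    unfolding mpo_payoff_def using assms
    by (intro sum_nonneg mult_nonneg_nonneg) (simp_all add: Qfun_bounds occ_cond_nonneg)
qed

lemma mpo_regret:
  assumes \<pi>1: "\<pi>s 1 \<in> policies H" "\<And>h s a. 1 \<le> h \<Longrightarrow> h \<le> H \<Longrightarrow> \<pi>_low \<le> \<pi>s 1 h s a" "0 < \<pi>_low"
    and step: "\<And>t. t \<in> {1..T} \<Longrightarrow> \<pi>s (Suc t) = mpo_update f r H s1 \<beta> (\<pi>s t)"
    and \<beta>: "0 < \<beta>" "\<beta> * real H \<le> 1"
    and \<sigma>: "\<sigma> \<in> policies H" and k: "1 \<le> k" "k \<le> H"
  shows "(\<Sum>t=1..T. \<Sum>a\<in>UNIV. (\<sigma> k s a - \<pi>s t k s a) * mpo_payoff f r H s1 (\<pi>s t) k s a)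
    \<le> ln (1 / \<pi>_low) / \<beta> + \<beta> * real T * (real H)\<^sup>2"
proof -
  define B where "B = ln (1 / \<pi>_low) / \<beta> + \<beta> * real T * (real H)\<^sup>2"
  define g where "g t a = mpo_payoff f r H s1 (\<pi>s t) k s a" for t a
  define avg where "avg t = (\<Sum>b\<in>UNIV. \<pi>s t k s b * g t b)" for t
  have \<pi>s: "\<pi>s t \<in> policies H" if "t \<in> {1..T}" for t
    using mpo_iterates_policies[OF \<pi>1(1) _ step] \<pi>1(2,3) that by (fastforce intro: less_le_trans)
  have regret: "(\<Sum>t=1..T. g t a0 - avg t) \<le> B" for a0
    unfolding B_def avg_def
  proof (rule exp_weights_regret[where p = "\<lambda>t. \<pi>s t k s"])
    show "\<pi>s (Suc t) k s a = \<pi>s t k s a * exp (\<beta> * g t a) / (\<Sum>b\<in>UNIV. \<pi>s t k s b * exp (\<beta> * g t b))"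
      if "t \<in> {1..T}" for t a
      using step[OF that] by (simp add: g_def mpo_update_eq)
    show "0 \<le> g t a" "g t a \<le> real H" if "t \<in> {1..T}" for t a
      using mpo_payoff_bounds[OF \<pi>s[OF that] k] by (simp_all add: g_def)
  qed (use \<pi>1 k \<beta> policy_sum in auto)
  have "(\<Sum>t=1..T. \<Sum>a\<in>UNIV. (\<sigma> k s a - \<pi>s t k s a) * g t a)
      = (\<Sum>t=1..T. \<Sum>a\<in>UNIV. \<sigma> k s a * (g t a - avg t))"
    using policy_sum[OF \<sigma> k]
    by (simp add: avg_def algebra_simps sum_subtractf flip: sum_distrib_left sum_distrib_right)
  also have "\<dots> = (\<Sum>a\<in>UNIV. \<sigma> k s a * (\<Sum>t=1..T. g t a - avg t))"
    by (subst sum.swap) (simp add: sum_distrib_left)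
  also have "\<dots> \<le> (\<Sum>a\<in>UNIV. \<sigma> k s a * B)"
    using regret policy_nonneg[OF \<sigma> k] by (intro sum_mono mult_left_mono)
  also have "\<dots> = B"
    using policy_sum[OF \<sigma> k] by (simp flip: sum_distrib_right)
  finally show ?thesis
    unfolding g_def B_def .
qed

end

section \<open>Games in which every state determines its initial state\<close>

locale tree_preference_game = preference_game f H \<nu>1 r
  for f :: "'s::finite \<Rightarrow> 'a::finite \<Rightarrow> 's \<Rightarrow> real" and H \<nu>1 r +
  fixes s1 :: "'s \<Rightarrow> 's"
  assumes initial_state: "\<And>s0 s h. 1 \<le> h \<Longrightarrow> h \<le> H \<Longrightarrow> 0 < \<nu>1 s0 \<Longrightarrow> s \<in> reach f s0 h \<Longrightarrow> s1 s = s0"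
begin

lemma weighted_sdist_other_initial_state:
  assumes "1 \<le> h" "h \<le> H" "s1 s \<noteq> s0"
  shows "\<nu>1 s0 * sdist f \<pi> s0 h s = 0"
proof (rule ccontr)
  assume "\<nu>1 s0 * sdist f \<pi> s0 h s \<noteq> 0"
  then have "0 < \<nu>1 s0" and "s \<in> reach f s0 h"
    using init_nonneg[of s0] sdist_nonzero_reach by (auto simp: order_le_less)
  then show False
    using initial_state assms by blast
qed

lemma weighted_occ_cond:
  assumes "1 \<le> h" "h \<le> H"
  shows "\<nu>1 s0 * occ_cond f \<pi> h s0 s a = (if s1 s = s0 then occ f \<nu>1 \<pi> h s a else 0)"
proof -
  have other: "\<nu>1 z * occ_cond f \<pi> h z s a = 0" if "s1 s \<noteq> z" for z
    using weighted_sdist_other_initial_state[OF assms that, of \<pi>] by (auto simp: occ_cond_def)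
  have "occ f \<nu>1 \<pi> h s a = (\<Sum>z\<in>UNIV. if z = s1 s then \<nu>1 z * occ_cond f \<pi> h z s a else 0)"
    unfolding occ_def using other by (intro sum.cong refl) auto
  then show ?thesis
    using other by auto
qed

lemma val_eq_val_occ: "val f r \<nu>1 H \<sigma> \<pi> = val_occ f r H s1 \<sigma> (occ f \<nu>1 \<pi>)"
  unfolding val_eq_sum_step_exp[OF horizon_pos] val_occ_def
proof (rule sum.cong[OF refl])
  fix j assume "j \<in> {1..H}"
  then have j: "1 \<le> j" "j \<le> H"
    by auto
  define R where "R z s' a' = (\<Sum>s\<in>UNIV. \<Sum>a\<in>UNIV. occ_cond f \<sigma> j z s a * r s a s' a')" for z s' a'
  have "(\<Sum>s0\<in>UNIV. \<nu>1 s0 * step_exp f \<sigma> \<pi> j s0 r)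
      = (\<Sum>s0\<in>UNIV. \<Sum>s'\<in>UNIV. \<Sum>a'\<in>UNIV. \<nu>1 s0 * occ_cond f \<pi> j s0 s' a' * R s0 s' a')"
    unfolding step_exp_def R_def by (subst sum_swap_pairs) (simp add: sum_distrib_left mult_ac)
  also have "\<dots> = (\<Sum>s0\<in>UNIV. \<Sum>s'\<in>UNIV. \<Sum>a'\<in>UNIV.
      if s0 = s1 s' then occ f \<nu>1 \<pi> j s' a' * R (s1 s') s' a' else 0)"
    using weighted_occ_cond[OF j] by (intro sum.cong refl) auto
  also have "\<dots> = (\<Sum>s'\<in>UNIV. \<Sum>a'\<in>UNIV. \<Sum>s0\<in>UNIV.
      if s0 = s1 s' then occ f \<nu>1 \<pi> j s' a' * R (s1 s') s' a' else 0)"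
    by (subst sum.swap, rule sum.cong[OF refl], rule sum.swap)
  finally show "(\<Sum>s0\<in>UNIV. \<nu>1 s0 * step_exp f \<sigma> \<pi> j s0 r) = (\<Sum>s'\<in>UNIV. \<Sum>a'\<in>UNIV.
      occ f \<nu>1 \<pi> j s' a' * (\<Sum>s\<in>UNIV. \<Sum>a\<in>UNIV. occ_cond f \<sigma> j (s1 s') s a * r s a s' a'))"
    by (simp add: R_def)
qed

lemma sum_initial_states_regroup:
  assumes "1 \<le> k" "k \<le> H"
  shows "(\<Sum>s0\<in>UNIV. \<nu>1 s0 * (\<Sum>s\<in>UNIV. \<Sum>a\<in>UNIV. \<Sum>s'\<in>UNIV. \<Sum>a'\<in>UNIV.
            sdist f \<sigma> s0 k s * d s a * occ_cond f \<pi> k s0 s' a' * Q s a s' a'))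
    = (\<Sum>s\<in>UNIV. state_occ f \<nu>1 \<sigma> k s *
        (\<Sum>a\<in>UNIV. d s a * (\<Sum>s'\<in>UNIV. \<Sum>a'\<in>UNIV. occ_cond f \<pi> k (s1 s) s' a' * Q s a s' a')))"
proof -
  define Y where "Y z s = (\<Sum>a\<in>UNIV. d s a * (\<Sum>s'\<in>UNIV. \<Sum>a'\<in>UNIV. occ_cond f \<pi> k z s' a' * Q s a s' a'))"
    for z s
  have "\<nu>1 s0 * sdist f \<sigma> s0 k s * Y s0 s = \<nu>1 s0 * sdist f \<sigma> s0 k s * Y (s1 s) s" for s0 s
    using weighted_sdist_other_initial_state[OF assms, of s s0 \<sigma>] by (cases "s1 s = s0") auto
  then have "(\<Sum>s0\<in>UNIV. \<nu>1 s0 * (\<Sum>s\<in>UNIV. \<Sum>a\<in>UNIV. \<Sum>s'\<in>UNIV. \<Sum>a'\<in>UNIV.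
            sdist f \<sigma> s0 k s * d s a * occ_cond f \<pi> k s0 s' a' * Q s a s' a'))
      = (\<Sum>s0\<in>UNIV. \<Sum>s\<in>UNIV. \<nu>1 s0 * sdist f \<sigma> s0 k s * Y (s1 s) s)"
    unfolding Y_def sum_distrib_left by (simp only: mult_ac)
  also have "\<dots> = (\<Sum>s\<in>UNIV. state_occ f \<nu>1 \<sigma> k s * Y (s1 s) s)"
    unfolding state_occ_def sum_distrib_right by (rule sum.swap)
  finally show ?thesis
    unfolding Y_def .
qed

theorem performance_difference:
  "val f r \<nu>1 H \<sigma> \<pi> - val f r \<nu>1 H \<pi> \<pi>
    = (\<Sum>k=1..H. \<Sum>s\<in>UNIV. state_occ f \<nu>1 \<sigma> k s *
        (\<Sum>a\<in>UNIV. (\<sigma> k s a - \<pi> k s a) * mpo_payoff f r H s1 \<pi> k s a))"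
proof -
  define F where "F k = val f r \<nu>1 H (hybrid k \<sigma> \<pi>) \<pi>" for k
  have "F (Suc H) = val f r \<nu>1 H \<sigma> \<pi>"
    unfolding F_def val_eq_sum_step_exp[OF horizon_pos] step_exp_def
    by (intro sum.cong refl) (simp add: occ_cond_hybrid)
  moreover have "F 1 = val f r \<nu>1 H \<pi> \<pi>"
    by (simp add: F_def hybrid_1)
  ultimately have "val f r \<nu>1 H \<sigma> \<pi> - val f r \<nu>1 H \<pi> \<pi> = (\<Sum>k=1..H. F (Suc k) - F k)"
    using sum_Suc_diff[of 1 H F] horizon_pos by simp
  also have "\<dots> = (\<Sum>k=1..H. \<Sum>s\<in>UNIV. state_occ f \<nu>1 \<sigma> k s *
        (\<Sum>a\<in>UNIV. (\<sigma> k s a - \<pi> k s a) * mpo_payoff f r H s1 \<pi> k s a))"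
    unfolding F_def mpo_payoff_def
    by (intro sum.cong refl) (simp add: val_hybrid_Suc_diff sum_initial_states_regroup)
  finally show ?thesis .
qed

lemma val_against_average_le:
  assumes T: "1 \<le> T" and \<pi>s: "\<And>t. t \<in> {1..T} \<Longrightarrow> \<pi>s t \<in> policies H"
    and \<pi>_avg: "\<forall>h\<in>{1..H}. \<forall>s a. occ f \<nu>1 \<pi>_avg h s a = (1 / real T) * (\<Sum>t=1..T. occ f \<nu>1 (\<pi>s t) h s a)"
    and \<sigma>: "\<sigma> \<in> policies H"
    and regret: "\<And>k s. 1 \<le> k \<Longrightarrow> k \<le> H \<Longrightarrow>
      (\<Sum>t=1..T. \<Sum>a\<in>UNIV. (\<sigma> k s a - \<pi>s t k s a) * mpo_payoff f r H s1 (\<pi>s t) k s a) \<le> B"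
  shows "val f r \<nu>1 H \<sigma> \<pi>_avg \<le> real H / 2 + real H * B / real T"
proof -
  have pd: "val f r \<nu>1 H \<sigma> (\<pi>s t) = real H / 2 + (\<Sum>k=1..H. \<Sum>s\<in>UNIV.
      state_occ f \<nu>1 \<sigma> k s * (\<Sum>a\<in>UNIV. (\<sigma> k s a - \<pi>s t k s a) * mpo_payoff f r H s1 (\<pi>s t) k s a))"
    if "t \<in> {1..T}" for t
    using performance_difference[of \<sigma> "\<pi>s t"] val_self[OF \<pi>s[OF that]] by simp
  have "(\<Sum>t=1..T. val f r \<nu>1 H \<sigma> (\<pi>s t)) = real T * (real H / 2) + (\<Sum>t=1..T. \<Sum>k=1..H. \<Sum>s\<in>UNIV.
      state_occ f \<nu>1 \<sigma> k s * (\<Sum>a\<in>UNIV. (\<sigma> k s a - \<pi>s t k s a) * mpo_payoff f r H s1 (\<pi>s t) k s a))"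
    by (simp add: pd sum.distrib)
  also have "(\<Sum>t=1..T. \<Sum>k=1..H. \<Sum>s\<in>UNIV.
      state_occ f \<nu>1 \<sigma> k s * (\<Sum>a\<in>UNIV. (\<sigma> k s a - \<pi>s t k s a) * mpo_payoff f r H s1 (\<pi>s t) k s a))
    = (\<Sum>k=1..H. \<Sum>s\<in>UNIV. state_occ f \<nu>1 \<sigma> k s *
      (\<Sum>t=1..T. \<Sum>a\<in>UNIV. (\<sigma> k s a - \<pi>s t k s a) * mpo_payoff f r H s1 (\<pi>s t) k s a))"
    by (subst sum.swap, rule sum.cong[OF refl], subst sum.swap) (simp add: sum_distrib_left)
  also have "\<dots> \<le> (\<Sum>k=1..H. \<Sum>s\<in>UNIV. state_occ f \<nu>1 \<sigma> k s * B)"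
    using regret \<sigma> by (intro sum_mono mult_left_mono) (auto simp: state_occ_nonneg)
  also have "\<dots> = real H * B"
    using \<sigma> by (simp add: state_occ_sum flip: sum_distrib_right)
  finally have "(\<Sum>t=1..T. val f r \<nu>1 H \<sigma> (\<pi>s t)) \<le> real T * (real H / 2 + real H * B / real T)"
    using T by (simp add: distrib_left)
  moreover have "val f r \<nu>1 H \<sigma> \<pi>_avg = (1 / real T) * (\<Sum>t=1..T. val f r \<nu>1 H \<sigma> (\<pi>s t))"
    unfolding val_eq_val_occ using \<pi>_avg by (intro val_occ_average) auto
  ultimately show ?thesis
    using T by (simp add: pos_divide_le_eq mult.commute)
qed

lemma mpo_best_response_bound:
  assumes \<pi>1: "\<pi>s 1 \<in> policies H" "\<And>h s a. 1 \<le> h \<Longrightarrow> h \<le> H \<Longrightarrow> \<pi>_low \<le> \<pi>s 1 h s a" "0 < \<pi>_low"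
    and step: "\<And>t. t \<in> {1..T} \<Longrightarrow> \<pi>s (Suc t) = mpo_update f r H s1 \<beta> (\<pi>s t)"
    and \<epsilon>: "0 < \<epsilon>" and T: "1 \<le> T" "real T = 16 * real H ^ 4 * ln (1 / \<pi>_low) / \<epsilon> ^ 2"
    and \<beta>: "\<beta> = sqrt (ln (1 / \<pi>_low) / (real T * real H ^ 2))"
    and \<pi>_avg: "\<pi>_avg \<in> policies H"
      "\<forall>h\<in>{1..H}. \<forall>s a. occ f \<nu>1 \<pi>_avg h s a = (1 / real T) * (\<Sum>t=1..T. occ f \<nu>1 (\<pi>s t) h s a)"
    and \<sigma>: "\<sigma> \<in> policies H"
  shows "val f r \<nu>1 H \<sigma> \<pi>_avg \<le> real H / 2 + \<epsilon>"
proof (cases "real H / 2 \<le> \<epsilon>")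
  \<comment> \<open>Values lie in [0, H], so only small \<open>\<epsilon>\<close> matter; these give \<open>\<beta> H \<le> 1\<close>, which exponential weights needs.\<close>
  case True
  then show ?thesis
    using val_antisym[OF \<pi>_avg(1) \<sigma>] val_nonneg[OF \<sigma> \<pi>_avg(1)] by simp
next
  case False
  have H: "0 < real H"
    using horizon_pos by simp
  have step_size: "\<beta> = \<epsilon> / (4 * real H ^ 3)"
    "real H * (ln (1 / \<pi>_low) / \<beta> + \<beta> * real T * real H ^ 2) / real T = \<epsilon> / 2"
    using mpo_step_size[OF H _ \<epsilon> T(2)] T(1) \<beta> by simp_all
  have "\<beta> * real H = \<epsilon> / (4 * real H ^ 2)"
    using H by (simp add: step_size(1) field_simps eval_nat_numeral)
  also have "\<dots> \<le> (real H / 2) / (4 * real H ^ 2)"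
    using False by (intro divide_right_mono) auto
  also have "\<dots> = 1 / (8 * real H)"
    using H by (simp add: field_simps eval_nat_numeral)
  also have "\<dots> \<le> 1"
    using horizon_pos by simp
  finally have "\<beta> * real H \<le> 1" .
  moreover have "0 < \<beta>"
    using step_size(1) \<epsilon> H by simp
  moreover have \<pi>s: "\<pi>s t \<in> policies H" if "t \<in> {1..T}" for t
    using mpo_iterates_policies[OF \<pi>1(1) _ step] \<pi>1(2,3) that by (fastforce intro: less_le_trans)
  ultimately have "val f r \<nu>1 H \<sigma> \<pi>_avg
      \<le> real H / 2 + real H * (ln (1 / \<pi>_low) / \<beta> + \<beta> * real T * real H ^ 2) / real T"
    using mpo_regret[OF \<pi>1 step] \<sigma> by (intro val_against_average_le[OF T(1) \<pi>s \<pi>_avg(2) \<sigma>]) auto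
  then show ?thesis
    unfolding step_size(2) using \<epsilon> by linarith
qed

end

theorem theorem5:
  fixes f :: "'s::finite \<Rightarrow> 'a::finite \<Rightarrow> 's \<Rightarrow> real"
    and \<nu>1 :: "'s \<Rightarrow> real"
    and r :: "'s \<Rightarrow> 'a \<Rightarrow> 's \<Rightarrow> 'a \<Rightarrow> real"
    and H T :: nat
    and s1 :: "'s \<Rightarrow> 's"
    and \<pi>1 :: "('s, 'a) policy"
    and \<pi>s :: "nat \<Rightarrow> ('s, 'a) policy"
    and \<pi>low \<epsilon> \<beta> :: real
  assumes H: "H \<ge> 1"
    and trans: "\<forall>s a. is_dist (f s a)"
    and init: "is_dist \<nu>1"
    and r_range: "\<forall>s a s' a'. 0 \<le> r s a s' a' \<and> r s a s' a' \<le> 1"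
    and r_anti: "\<forall>s a s' a'. r s a s' a' = 1 - r s' a' s a"
    and reach_ex: "\<forall>s. \<exists>s0. \<exists>h\<in>{1..H}. \<nu>1 s0 > 0 \<and> s \<in> reach f s0 h"
    and reach_uniq: "\<forall>s0 s. \<forall>h\<in>{1..H}. \<nu>1 s0 > 0 \<longrightarrow> s \<in> reach f s0 h \<longrightarrow> s1 s = s0"
    and pi1_pol: "\<pi>1 \<in> policies H"
    and pilow_pos: "\<pi>low > 0"
    and pi1_low: "\<forall>h\<in>{1..H}. \<forall>s a. \<pi>1 h s a \<ge> \<pi>low"
    and eps: "\<epsilon> > 0"
    and T_ge: "T \<ge> 1"
    and T_def: "real T = 16 * real H ^ 4 * ln (1 / \<pi>low) / \<epsilon> ^ 2"
    and beta_def: "\<beta> = sqrt (ln (1 / \<pi>low) / (real T * real H ^ 2))"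
    and start: "\<pi>s 1 = \<pi>1"
    and step: "\<forall>t\<in>{1..T}. \<pi>s (Suc t) = mpo_update f r H s1 \<beta> (\<pi>s t)"
  shows "\<exists>\<pi>bar \<in> policies H.
           (\<forall>h\<in>{1..H}. \<forall>s a. occ f \<nu>1 \<pi>bar h s a = (1 / real T) * (\<Sum>t=1..T. occ f \<nu>1 (\<pi>s t) h s a))
           \<and> approx_NE f r \<nu>1 H \<epsilon> \<pi>bar"
proof -
  interpret tree_preference_game f H \<nu>1 r s1
  proof
    show "is_dist (f s a)" for s a
      using trans by blast
    show "0 \<le> r s a s' a'" "r s a s' a' \<le> 1" "r s a s' a' = 1 - r s' a' s a" for s a s' a'
      using r_range r_anti by blast+
    show "s1 s = s0" if "1 \<le> h" "h \<le> H" "0 < \<nu>1 s0" "s \<in> reach f s0 h" for s0 s h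
      using reach_uniq that atLeastAtMost_iff by blast
  qed (fact init H)+
  have \<pi>1: "\<pi>s 1 \<in> policies H" "\<And>h s a. 1 \<le> h \<Longrightarrow> h \<le> H \<Longrightarrow> \<pi>low \<le> \<pi>s 1 h s a"
    using start pi1_pol pi1_low by auto
  have step': "\<And>t. t \<in> {1..T} \<Longrightarrow> \<pi>s (Suc t) = mpo_update f r H s1 \<beta> (\<pi>s t)"
    using step by blast
  have "\<pi>s t \<in> policies H" if "t \<in> {1..T}" for t
    using mpo_iterates_policies[OF \<pi>1(1) _ step'] \<pi>1(2) pilow_pos that by (fastforce intro: less_le_trans)
  then obtain \<pi>_avg where \<pi>_avg: "\<pi>_avg \<in> policies H"
    "\<forall>h\<in>{1..H}. \<forall>s a. occ f \<nu>1 \<pi>_avg h s a = (1 / real T) * (\<Sum>t=1..T. occ f \<nu>1 (\<pi>s t) h s a)"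
    using averaged_policy_exists[OF T_ge] by blast
  have "approx_NE f r \<nu>1 H \<epsilon> \<pi>_avg"
    using \<pi>_avg(1)
  proof (rule approx_NE_if_best_responses_bounded)
    show "val f r \<nu>1 H \<sigma> \<pi>_avg \<le> real H / 2 + \<epsilon>" if "\<sigma> \<in> policies H" for \<sigma>
      using mpo_best_response_bound[OF \<pi>1 pilow_pos step' eps T_ge T_def beta_def \<pi>_avg that] .
  qed
  with \<pi>_avg show ?thesis
    by blast
qed

end
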